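(* Let $\lambda>0$ and $K(\lambda, z) = \left(\frac{\cos \pi z}{\pi}\right)\sum_{n \in \mathbb{Z}} \frac{ (-1)^{n}\, e^{-\lambda|n- \frac{1}{2}|}}{z - n + \frac{1}{2}}$. If $0<\beta<\frac12$, then for every $z$ with $\Re(z)>\beta$, $$e^{-\lambda z}-K(\lambda,z)=\frac{1}{2\pi i}\int_{\beta-i\infty}^{\beta+i\infty}\left(\frac{\cos\pi z}{\cos\pi w}\right)\left(\frac{2w}{z^2-w^2}\right)e^{-\lambda w}\,\mathrm{d}w.$$ *)

theory Defs
  imports "HOL-Analysis.Analysis"
begin

definition K_raw :: "real \<Rightarrow> complex \<Rightarrow> complex" where
  "K_raw lam z = (cos (of_real pi * z) / of_real pi) *
     (\<Sum>\<^sub>\<infinity>n::int. ((-1::complex) ^ nat \<bar>n\<bar>) *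
        of_real (exp (- lam * \<bar>real_of_int n - 1/2\<bar>)) / (z - of_int n + 1/2))"

text \<open>K(lambda, -) is entire: at the zeros of cos (pi z) (the half-integers, where the
  series has poles) its value is the removable-singularity value, i.e. the limit.\<close>
definition K :: "real \<Rightarrow> complex \<Rightarrow> complex" where
  "K lam z = (if cos (of_real pi * z) = 0 then Lim (at z) (K_raw lam) else K_raw lam z)"

end

theory Submission
  imports Defs "HOL-Complex_Analysis.Complex_Analysis" "HOL-Real_Asymp.Real_Asymp"
begin

text \<open>The integrand is meromorphic in w, with simple poles at w = z (residue -e^{-\<lambda>z}) and at the
  half-integers m + 1/2, where the residue is cos(\<pi>z)/\<pi> times the sum of the terms n = m + 1 and
  n = -m of the series defining K. Integrating over the rectangle with corners \<beta> - iN and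
  \<beta> + N + iN therefore produces the partial sums of that series. As N \<rightarrow> \<infinity> the three far edges
  vanish, because |cos \<pi>w| grows like e^{\<pi>|Im w|} on the horizontal edges and e^{-\<lambda>w} decays on
  the right edge, while the left edge tends to the line integral by dominated convergence.
  At a half-integer z the integrand vanishes identically, and K(\<lambda>, z) = e^{-\<lambda>z} follows from the
  identity at nearby points \<zeta>, whose right-hand side is O(|cos \<pi>\<zeta>|).\<close>

lemma cos_pi_eq_0_imp_half_integer:
  fixes w :: complex
  assumes "cos (of_real pi * w) = 0"
  shows "\<exists>n::int. w = of_int n + 1/2"
proof -
  obtain n :: int where "of_real pi * w = of_real (of_int n * pi) + of_real pi / 2"
    using assms cos_eq_0 by blast
  then have "of_real pi * w = of_real pi * (of_int n + 1/2)"
    by (simp add: algebra_simps)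
  then show ?thesis by auto
qed

lemma cos_pi_of_nat_plus_half: "cos (of_real pi * of_real (real m + 1/2)) = (0::complex)"
proof -
  have "cos (pi * (real m + 1/2)) = 0"
    by (simp add: algebra_simps cos_add cos_npi sin_npi)
  then show ?thesis
    by (metis cos_of_real of_real_0 of_real_mult)
qed

lemma sin_pi_of_nat_plus_half: "sin (of_real pi * of_real (real m + 1/2)) = ((-1::complex) ^ m)"
proof -
  have "sin (pi * (real m + 1/2)) = (-1) ^ m"
    by (simp add: algebra_simps sin_add cos_npi sin_npi)
  then show ?thesis
    by (metis sin_of_real of_real_mult of_real_minus of_real_1 of_real_power)
qed

lemma cos_pi_pos:
  assumes "\<bar>x\<bar> < 1/2"
  shows "cos (pi * x) > 0"
proof -
  have "- 1/2 < x" "x < 1/2"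
    using assms by auto
  then have "pi * (- 1/2) < pi * x" "pi * x < pi * (1/2)"
    using pi_gt_zero by (simp_all only: mult_strict_left_mono)
  then show ?thesis by (intro cos_gt_zero_pi) simp_all
qed

lemma norm_cos_ge_exp_abs_Im:
  fixes w :: complex
  shows "norm (cos w) \<ge> (exp \<bar>Im w\<bar> - exp (- \<bar>Im w\<bar>)) / 2"
proof -
  have "norm (cos w) ^ 2 \<ge> ((exp \<bar>Im w\<bar> - exp (- \<bar>Im w\<bar>)) / 2) ^ 2"
    by (cases "Im w \<ge> 0") (auto simp: norm_cos_squared power_divide exp_minus power2_commute)
  then show ?thesis
    by (meson norm_ge_zero power2_le_imp_le)
qed

lemma norm_cos_pi_ge_on_vertical_line:
  fixes w :: complex
  assumes "Re w = \<beta> + real N"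
  shows "norm (cos (of_real pi * w)) \<ge> \<bar>cos (pi * \<beta>)\<bar> * exp (pi * \<bar>Im w\<bar>) / 2"
proof -
  have "\<bar>cos (pi * Re w)\<bar> = \<bar>cos (pi * \<beta>)\<bar>"
    using assms by (simp add: algebra_simps cos_add abs_mult)
  moreover have "exp (pi * \<bar>Im w\<bar>) \<le> exp (pi * Im w) + exp (- (pi * Im w))"
    by (cases "Im w \<ge> 0") auto
  ultimately have "\<bar>cos (pi * \<beta>)\<bar> * exp (pi * \<bar>Im w\<bar>) / 2 \<le> \<bar>Re (cos (of_real pi * w))\<bar>"
    by (simp add: Re_cos abs_mult mult_left_mono add_pos_pos)
  also have "\<dots> \<le> norm (cos (of_real pi * w))" by (rule abs_Re_le_cmod)
  finally show ?thesis .
qed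

lemma norm_inverse_diff_squares_le:
  fixes z w :: complex
  assumes "d > 0" "norm (z - w) \<ge> d" "norm (z + w) \<ge> d"
  shows "norm (2 * w / (z^2 - w^2)) \<le> 2 / d"
proof -
  have "z - w \<noteq> 0" "z + w \<noteq> 0" using assms by auto
  then have "2 * w / (z^2 - w^2) = 1 / (z - w) - 1 / (z + w)"
    by (simp add: field_simps power2_eq_square)
  also have "norm \<dots> \<le> norm (1 / (z - w)) + norm (1 / (z + w))"
    by (rule norm_triangle_ineq4)
  also have "\<dots> = 1 / norm (z - w) + 1 / norm (z + w)"
    by (simp add: norm_divide)
  also have "\<dots> \<le> 1 / d + 1 / d"
    using assms by (intro add_mono frac_le) auto
  finally show ?thesis by simp
qed

definition kernel :: "real \<Rightarrow> complex \<Rightarrow> complex \<Rightarrow> complex" where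
  "kernel lam z w = (cos (of_real pi * z) / cos (of_real pi * w)) * (2 * w / (z^2 - w^2))
     * exp (- of_real lam * w)"

lemma kernel_eq_quotient:
  "kernel lam z = (\<lambda>w. (cos (of_real pi * z) * (2 * w) * exp (- of_real lam * w))
                         / (cos (of_real pi * w) * (z^2 - w^2)))"
  by (simp add: fun_eq_iff kernel_def)

lemma kernel_holomorphic:
  "kernel lam z holomorphic_on {w. cos (of_real pi * w) \<noteq> 0 \<and> w^2 \<noteq> z^2}"
  unfolding kernel_def by (intro holomorphic_intros) auto

lemma norm_kernel_le:
  assumes "c > 0" "norm (cos (of_real pi * w)) \<ge> c"
    and "d > 0" "norm (z - w) \<ge> d" "norm (z + w) \<ge> d"
  shows "norm (kernel lam z w) \<le> norm (cos (of_real pi * z)) / c * (2 / d) * exp (- lam * Re w)"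
proof -
  have "norm (cos (of_real pi * z) / cos (of_real pi * w)) \<le> norm (cos (of_real pi * z)) / c"
    using assms by (auto simp: norm_divide intro!: divide_left_mono mult_pos_pos)
  moreover have "norm (2 * w / (z^2 - w^2)) \<le> 2 / d"
    using assms by (intro norm_inverse_diff_squares_le)
  ultimately have quotients: "norm (cos (of_real pi * z) / cos (of_real pi * w)) * norm (2 * w / (z^2 - w^2))
      \<le> norm (cos (of_real pi * z)) / c * (2 / d)"
    using assms by (intro mult_mono) auto
  have "norm (kernel lam z w)
      = norm (cos (of_real pi * z) / cos (of_real pi * w)) * norm (2 * w / (z^2 - w^2)) * exp (- lam * Re w)"
    unfolding kernel_def norm_mult norm_exp_eq_Re by simp
  also have "\<dots> \<le> norm (cos (of_real pi * z)) / c * (2 / d) * exp (- lam * Re w)"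
    using quotients by (rule mult_right_mono) simp
  finally show ?thesis .
qed

definition K_term :: "real \<Rightarrow> complex \<Rightarrow> int \<Rightarrow> complex" where
  "K_term lam z n = ((-1::complex) ^ nat \<bar>n\<bar>) *
     of_real (exp (- lam * \<bar>real_of_int n - 1/2\<bar>)) / (z - of_int n + 1/2)"

lemma K_raw_eq_infsum: "K_raw lam z = cos (of_real pi * z) / of_real pi * (\<Sum>\<^sub>\<infinity>n. K_term lam z n)"
  unfolding K_raw_def K_term_def ..

lemma K_term_plus_one:
  "K_term lam z (int m + 1) = - ((-1)^m * of_real (exp (- lam * (real m + 1/2))) / (z - of_real (real m + 1/2)))"
  by (simp add: K_term_def nat_add_distrib algebra_simps)

lemma K_term_minus:
  "K_term lam z (- int m) = (-1)^m * of_real (exp (- lam * (real m + 1/2))) / (z + of_real (real m + 1/2))"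
  by (simp add: K_term_def algebra_simps)

lemma residue_kernel_at_z:
  assumes "cos (of_real pi * z) \<noteq> 0" "z \<noteq> 0"
  shows "residue (kernel lam z) z = - exp (- of_real lam * z)"
proof -
  have "((\<lambda>w. cos (of_real pi * w) * (z^2 - w^2)) has_field_derivative
          - (cos (of_real pi * z) * (2 * z))) (at z)"
    by (auto intro!: derivative_eq_intros simp: power2_eq_square)
  then have "residue (kernel lam z) z
      = cos (of_real pi * z) * (2 * z) * exp (- of_real lam * z) / - (cos (of_real pi * z) * (2 * z))"
    unfolding kernel_eq_quotient
    by (intro residue_simple_pole_deriv[where s = UNIV]) (use assms in \<open>auto intro!: holomorphic_intros\<close>)
  then show ?thesis using assms by simp
qed

lemma residue_kernel_at_half_integer:
  assumes "cos (of_real pi * z) \<noteq> 0" "Re z > 0"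
  shows "residue (kernel lam z) (of_real (real m + 1/2))
     = cos (of_real pi * z) / of_real pi * (K_term lam z (int m + 1) + K_term lam z (- int m))"
proof -
  define p :: complex where "p = of_real (real m + 1/2)"
  define s :: complex where "s = (-1)^m"
  define E :: complex where "E = of_real (exp (- lam * (real m + 1/2)))"
  have cos_p: "cos (of_real pi * p) = 0"
    unfolding p_def by (rule cos_pi_of_nat_plus_half)
  have "z - p \<noteq> 0" using assms cos_p by auto
  moreover have "z + p \<noteq> 0" using assms by (auto simp: p_def complex_eq_iff)
  moreover have "p \<noteq> 0" by (simp add: p_def complex_eq_iff)
  moreover have "s = 1 \<or> s = -1" by (cases "even m") (auto simp: s_def)
  moreover have "((\<lambda>w. cos (of_real pi * w) * (z^2 - w^2)) has_field_derivative
          - (of_real pi * s) * (z^2 - p^2)) (at p)"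
    using cos_pi_of_nat_plus_half[of m] sin_pi_of_nat_plus_half[of m]
    by (auto intro!: derivative_eq_intros simp: p_def s_def)
  moreover have factor: "z^2 - p^2 = (z - p) * (z + p)"
    by (simp add: power2_eq_square algebra_simps)
  ultimately have "residue (kernel lam z) p
      = cos (of_real pi * z) * (2 * p) * exp (- of_real lam * p) / - (of_real pi * s * (z^2 - p^2))"
    unfolding kernel_eq_quotient
    using assms cos_p
    by (intro residue_simple_pole_deriv[where s = UNIV]) (auto intro!: holomorphic_intros)
  also have "exp (- of_real lam * p) = E"
    by (simp add: p_def E_def flip: exp_of_real)
  also note factor
  also have "cos (of_real pi * z) * (2 * p) * E / - (of_real pi * s * ((z - p) * (z + p)))
      = cos (of_real pi * z) / of_real pi * (- (s * E / (z - p)) + s * E / (z + p))"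
    using \<open>z - p \<noteq> 0\<close> \<open>z + p \<noteq> 0\<close> \<open>s = 1 \<or> s = -1\<close>
    by (auto simp: divide_simps algebra_simps)
  finally show ?thesis
    by (simp add: K_term_plus_one K_term_minus p_def s_def E_def)
qed

lemma summable_exp_neg_half_integers:
  assumes "lam > 0"
  shows "summable (\<lambda>m::nat. exp (- lam * (real m + 1/2)))"
proof -
  have "exp (- lam * (real m + 1/2)) = exp (- lam / 2) * exp (- lam) ^ m" for m
    by (simp add: algebra_simps flip: exp_add exp_of_nat_mult)
  moreover have "summable (\<lambda>m::nat. exp (- lam / 2) * exp (- lam) ^ m)"
    using assms by (intro summable_mult summable_geometric) simp
  ultimately show ?thesis by simp
qed

lemma norm_K_term_le:
  assumes "norm (z - of_int n + 1/2) \<ge> 1/2"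
  shows "norm (K_term lam z n) \<le> 2 * exp (- lam * \<bar>real_of_int n - 1/2\<bar>)"
proof -
  have "norm (K_term lam z n) = exp (- lam * \<bar>real_of_int n - 1/2\<bar>) / norm (z - of_int n + 1/2)"
    by (simp add: K_term_def norm_divide norm_mult norm_power)
  also have "\<dots> \<le> exp (- lam * \<bar>real_of_int n - 1/2\<bar>) / (1/2)"
    using assms by (intro divide_left_mono) auto
  finally show ?thesis by simp
qed

lemma summable_norm_K_term_plus_one:
  assumes "lam > 0"
  shows "summable (\<lambda>m. norm (K_term lam z (int m + 1)))"
proof (rule summable_comparison_test')
  show "summable (\<lambda>m::nat. 2 * exp (- lam * (real m + 1/2)))"
    using summable_exp_neg_half_integers[OF assms] by (rule summable_mult)
  fix m :: nat
  assume "m \<ge> nat \<lceil>norm z\<rceil>"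
  moreover have "norm (of_real (real m + 1/2) :: complex) = real m + 1/2"
    by (simp only: norm_of_real)
  ultimately have "norm (of_real (real m + 1/2) :: complex) - norm z \<ge> 1/2"
    by linarith
  also have "norm (of_real (real m + 1/2) :: complex) - norm z \<le> norm (z - of_int (int m + 1) + 1/2)"
    using norm_triangle_ineq2[of "of_real (real m + 1/2)" z] by (simp add: norm_minus_commute diff_diff_eq)
  finally have "norm (z - of_int (int m + 1) + 1/2) \<ge> 1/2" .
  then have "norm (K_term lam z (int m + 1)) \<le> 2 * exp (- lam * \<bar>real_of_int (int m + 1) - 1/2\<bar>)"
    by (rule norm_K_term_le)
  then show "norm (norm (K_term lam z (int m + 1))) \<le> 2 * exp (- lam * (real m + 1/2))"
    by (simp add: add.commute)
qed

lemma summable_norm_K_term_minus: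
  assumes "lam > 0" "Re z > 0"
  shows "summable (\<lambda>m. norm (K_term lam z (- int m)))"
proof (rule summable_comparison_test')
  show "summable (\<lambda>m::nat. 2 * exp (- lam * (real m + 1/2)))"
    using summable_exp_neg_half_integers[OF assms(1)] by (rule summable_mult)
  fix m :: nat
  have "1/2 \<le> Re (z - of_int (- int m) + 1/2)"
    using assms by simp
  also have "\<dots> \<le> norm (z - of_int (- int m) + 1/2)"
    by (rule complex_Re_le_cmod)
  finally have "norm (z - of_int (- int m) + 1/2) \<ge> 1/2" .
  then have "norm (K_term lam z (- int m)) \<le> 2 * exp (- lam * \<bar>real_of_int (- int m) - 1/2\<bar>)"
    by (rule norm_K_term_le)
  then show "norm (norm (K_term lam z (- int m))) \<le> 2 * exp (- lam * (real m + 1/2))"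
    by (simp add: add.commute)
qed

lemma K_term_pairs_sums:
  assumes "lam > 0" "Re z > 0"
  shows "(\<lambda>m. K_term lam z (int m + 1) + K_term lam z (- int m)) sums (\<Sum>\<^sub>\<infinity>n. K_term lam z n)"
proof -
  define f g where "f = (\<lambda>m. K_term lam z (int m + 1))" and "g = (\<lambda>m. K_term lam z (- int m))"
  have f: "summable (\<lambda>m. norm (f m))" and g: "summable (\<lambda>m. norm (g m))"
    unfolding f_def g_def
    using summable_norm_K_term_plus_one summable_norm_K_term_minus assms by blast+
  have "(K_term lam z has_sum suminf f) ((\<lambda>m. int m + 1) ` UNIV)"
    using norm_summable_imp_has_sum[OF f summable_sums[OF summable_norm_cancel[OF f]]]
    by (subst has_sum_reindex) (auto simp: inj_on_def f_def comp_def)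
  moreover have "(K_term lam z has_sum suminf g) ((\<lambda>m. - int m) ` UNIV)"
    using norm_summable_imp_has_sum[OF g summable_sums[OF summable_norm_cancel[OF g]]]
    by (subst has_sum_reindex) (auto simp: inj_on_def g_def comp_def)
  ultimately have "(K_term lam z has_sum (suminf f + suminf g)) ((\<lambda>m. int m + 1) ` UNIV \<union> (\<lambda>m. - int m) ` UNIV)"
    by (rule has_sum_Un_disjoint) auto
  moreover have "(\<lambda>m. int m + 1) ` UNIV \<union> (\<lambda>m. - int m) ` UNIV = UNIV"
    by (auto simp: image_iff) presburger
  ultimately have infsum: "(\<Sum>\<^sub>\<infinity>n. K_term lam z n) = suminf f + suminf g"
    by (simp add: infsumI)
  have "(\<lambda>m. f m + g m) sums (suminf f + suminf g)"
    using summable_norm_cancel[OF f] summable_norm_cancel[OF g] by (intro sums_add summable_sums)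
  then show ?thesis
    by (simp only: infsum f_def g_def)
qed

lemma rectpath_residue_theorem:
  assumes "Re a \<le> Re b" "Im a \<le> Im b"
    and "open S" "convex S" "cbox a b \<subseteq> S"
    and "finite pts" "pts \<subseteq> box a b" "f holomorphic_on S - pts"
  shows "contour_integral (rectpath a b) f = 2 * pi * \<i> * (\<Sum>p\<in>pts. residue f p)"
proof -
  have "path_image (rectpath a b) \<subseteq> S - pts"
    using path_image_rectpath_cbox_minus_box[OF assms(1,2)] assms(5,7) by auto
  moreover have "\<forall>w. w \<notin> S \<longrightarrow> winding_number (rectpath a b) w = 0"
    using winding_number_rectpath_outside[OF assms(1,2)] assms(5) by auto
  ultimately have "contour_integral (rectpath a b) f
      = 2 * pi * \<i> * (\<Sum>p\<in>pts. winding_number (rectpath a b) p * residue f p)"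
    using assms by (intro Residue_theorem) (auto intro: convex_connected)
  also have "(\<Sum>p\<in>pts. winding_number (rectpath a b) p * residue f p) = (\<Sum>p\<in>pts. residue f p)"
    using assms(7) winding_number_rectpath by (intro sum.cong) auto
  finally show ?thesis .
qed

lemma contour_integral_rectpath_split:
  fixes a b :: complex
  assumes "continuous_on (path_image (rectpath a b)) f" "Im a < Im b"
  defines "a' \<equiv> Complex (Re b) (Im a)" and "b' \<equiv> Complex (Re a) (Im b)"
  shows "contour_integral (rectpath a b) f
    = contour_integral (linepath a a') f + contour_integral (linepath a' b) f
      + contour_integral (linepath b b') f - \<i> * integral {Im a..Im b} (\<lambda>t. f (Complex (Re a) t))"
proof -
  have image: "path_image (rectpath a b)
      = closed_segment a a' \<union> closed_segment a' b \<union> closed_segment b b' \<union> closed_segment b' a"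
    by (simp add: rectpath_def Let_def path_image_join a'_def b'_def Un_assoc)
  have integral: "(f has_contour_integral contour_integral (linepath u v) f) (linepath u v)"
    if "closed_segment u v \<subseteq> path_image (rectpath a b)" for u v
    using continuous_on_subset[OF assms(1) that]
    by (intro has_contour_integral_integral contour_integrable_continuous_linepath)
  have "(f has_contour_integral
          (contour_integral (linepath a a') f + (contour_integral (linepath a' b) f
           + (contour_integral (linepath b b') f + contour_integral (linepath b' a) f))))
         (rectpath a b)"
    unfolding rectpath_def Let_def a'_def [symmetric] b'_def [symmetric]
    by (intro has_contour_integral_join integral valid_path_join valid_path_linepath) (auto simp: image)
  then have "contour_integral (rectpath a b) f
      = contour_integral (linepath a a') f + contour_integral (linepath a' b) f
        + contour_integral (linepath b b') f + contour_integral (linepath b' a) f"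
    by (simp only: contour_integral_unique add.assoc)
  moreover have "contour_integral (linepath b' a) f = - contour_integral (linepath a b') f"
    using continuous_on_subset[OF assms(1)] image
    by (intro contour_integral_reverse_linepath) (auto simp: closed_segment_commute)
  moreover have "contour_integral (linepath a b') f = \<i> * integral {Im a..Im b} (\<lambda>t. f (Complex (Re a) t))"
    using assms(2) by (intro contour_integral_linepath_same_Re) (auto simp: b'_def)
  ultimately show ?thesis
    by simp
qed

lemma kernel_rectpath_integral:
  fixes N :: nat
  assumes "0 < \<beta>" "\<beta> < 1/2" "Re z > \<beta>" "cos (of_real pi * z) \<noteq> 0"
    and "real N > Re z - \<beta>" "real N > \<bar>Im z\<bar>"
  shows "contour_integral (rectpath (Complex \<beta> (- real N)) (Complex (\<beta> + real N) (real N))) (kernel lam z)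
    = 2 * of_real pi * \<i> * (cos (of_real pi * z) / of_real pi
        * (\<Sum>m<N. K_term lam z (int m + 1) + K_term lam z (- int m)) - exp (- of_real lam * z))"
proof -
  define a b where "a = Complex \<beta> (- real N)" and "b = Complex (\<beta> + real N) (real N)"
  define p :: "nat \<Rightarrow> complex" where "p m = of_real (real m + 1/2)" for m
  define pts where "pts = insert z (p ` {..<N})"
  define \<epsilon> where "\<epsilon> = (1/2 - \<beta>) / 2"
  \<comment> \<open>an open box around the rectangle that still excludes the poles -z and N + 1/2\<close>
  define S where "S = box (Complex (\<beta>/2) (- real N - 1)) (Complex (\<beta> + real N + \<epsilon>) (real N + 1))"
  have "\<epsilon> > 0" "\<beta> + \<epsilon> < 1/2"
    using assms(2) by (simp_all add: \<epsilon>_def field_simps)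
  have "pts \<subseteq> box a b"
    using assms by (auto simp: pts_def p_def a_def b_def in_box_complex_iff)
  moreover have "cbox a b \<subseteq> S"
    using assms \<open>\<epsilon> > 0\<close> by (auto simp: S_def a_def b_def in_box_complex_iff in_cbox_complex_iff)
  moreover have "cos (of_real pi * w) \<noteq> 0 \<and> w^2 \<noteq> z^2" if w: "w \<in> S" "w \<notin> pts" for w
  proof
    have Re_w: "\<beta>/2 < Re w" "Re w < \<beta> + real N + \<epsilon>"
      using w by (auto simp: S_def in_box_complex_iff)
    show "cos (of_real pi * w) \<noteq> 0"
    proof
      assume "cos (of_real pi * w) = 0"
      then obtain n :: int where n: "w = of_int n + 1/2"
        using cos_pi_eq_0_imp_half_integer by blast
      with Re_w assms \<open>\<beta> + \<epsilon> < 1/2\<close> have "0 \<le> n" "n < int N" by auto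
      with n have "w = p (nat n)" "nat n < N"
        by (auto simp: p_def)
      then show False using w by (auto simp: pts_def)
    qed
    show "w^2 \<noteq> z^2"
      using w Re_w assms by (auto simp: power2_eq_iff pts_def)
  qed
  then have "kernel lam z holomorphic_on S - pts"
    by (intro holomorphic_on_subset[OF kernel_holomorphic]) blast
  ultimately have "contour_integral (rectpath a b) (kernel lam z) = 2 * pi * \<i> * (\<Sum>q\<in>pts. residue (kernel lam z) q)"
    using assms by (intro rectpath_residue_theorem) (auto simp: a_def b_def S_def pts_def)
  also have "(\<Sum>q\<in>pts. residue (kernel lam z) q)
      = residue (kernel lam z) z + (\<Sum>m<N. residue (kernel lam z) (p m))"
  proof -
    have "z \<notin> p ` {..<N}"
      using assms(4) cos_pi_of_nat_plus_half by (auto simp: p_def)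
    moreover have "inj_on p {..<N}"
      by (auto simp: inj_on_def p_def)
    ultimately show ?thesis
      by (simp add: pts_def sum.reindex)
  qed
  also have "\<dots> = cos (of_real pi * z) / of_real pi * (\<Sum>m<N. K_term lam z (int m + 1) + K_term lam z (- int m))
      - exp (- of_real lam * z)"
  proof -
    have "residue (kernel lam z) (p m)
        = cos (of_real pi * z) / of_real pi * (K_term lam z (int m + 1) + K_term lam z (- int m))" for m
      unfolding p_def using assms by (intro residue_kernel_at_half_integer) auto
    moreover have "residue (kernel lam z) z = - exp (- of_real lam * z)"
      using assms by (intro residue_kernel_at_z) auto
    ultimately show ?thesis
      by (simp add: sum_distrib_left)
  qed
  finally show ?thesis by (simp add: a_def b_def)
qed

lemma norm_contour_integral_kernel_linepath_le:
  assumes "c > 0" "d > 0" "lam \<ge> 0"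
    and "\<And>w. w \<in> closed_segment u v \<Longrightarrow> norm (cos (of_real pi * w)) \<ge> c"
    and "\<And>w. w \<in> closed_segment u v \<Longrightarrow> norm (z - w) \<ge> d \<and> norm (z + w) \<ge> d"
    and "\<And>w. w \<in> closed_segment u v \<Longrightarrow> Re w \<ge> r"
  shows "norm (contour_integral (linepath u v) (kernel lam z))
    \<le> norm (cos (of_real pi * z)) / c * (2 / d) * exp (- lam * r) * norm (v - u)"
proof (rule contour_integral_bound_linepath)
  have "closed_segment u v \<subseteq> {w. cos (of_real pi * w) \<noteq> 0 \<and> w^2 \<noteq> z^2}"
    using assms(1,2,4,5) by (force simp: power2_eq_iff)
  then show "kernel lam z contour_integrable_on linepath u v"
    by (intro contour_integrable_continuous_linepath holomorphic_on_imp_continuous_on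
        holomorphic_on_subset[OF kernel_holomorphic])
  show "0 \<le> norm (cos (of_real pi * z)) / c * (2 / d) * exp (- lam * r)"
    using assms by simp
  fix w assume w: "w \<in> closed_segment u v"
  have "norm (kernel lam z w) \<le> norm (cos (of_real pi * z)) / c * (2 / d) * exp (- lam * Re w)"
    using assms w by (intro norm_kernel_le) auto
  also have "\<dots> \<le> norm (cos (of_real pi * z)) / c * (2 / d) * exp (- lam * r)"
    using assms w by (intro mult_left_mono) (auto simp: mult_left_mono)
  finally show "norm (kernel lam z w) \<le> norm (cos (of_real pi * z)) / c * (2 / d) * exp (- lam * r)" .
qed

lemma norm_contour_integral_kernel_horizontal_le:
  assumes "lam \<ge> 0" "Im v = Im u" "\<bar>Im u\<bar> \<ge> \<bar>Im z\<bar> + 1" "Re u \<ge> 0" "Re v \<ge> 0"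
  shows "norm (contour_integral (linepath u v) (kernel lam z))
    \<le> norm (cos (of_real pi * z)) / ((exp (pi * \<bar>Im u\<bar>) - exp (- pi * \<bar>Im u\<bar>)) / 2) * 2 * norm (v - u)"
proof -
  have on_segment: "Im w = Im u" "Re w \<ge> 0" if "w \<in> closed_segment u v" for w
    using that assms by (auto simp: closed_segment_same_Im closed_segment_eq_real_ivl split: if_splits)
  have "norm (contour_integral (linepath u v) (kernel lam z))
      \<le> norm (cos (of_real pi * z)) / ((exp (pi * \<bar>Im u\<bar>) - exp (- pi * \<bar>Im u\<bar>)) / 2) * (2 / 1)
        * exp (- lam * 0) * norm (v - u)"
  proof (rule norm_contour_integral_kernel_linepath_le)
    show "(exp (pi * \<bar>Im u\<bar>) - exp (- pi * \<bar>Im u\<bar>)) / 2 > 0"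
      using assms(3) by simp
    fix w assume w: "w \<in> closed_segment u v"
    show "norm (cos (of_real pi * w)) \<ge> (exp (pi * \<bar>Im u\<bar>) - exp (- pi * \<bar>Im u\<bar>)) / 2"
      using norm_cos_ge_exp_abs_Im[of "of_real pi * w"] on_segment[OF w] by (simp add: abs_mult)
    show "norm (z - w) \<ge> 1 \<and> norm (z + w) \<ge> 1"
      using abs_Im_le_cmod[of "z - w"] abs_Im_le_cmod[of "z + w"] on_segment[OF w] assms(3) by auto
    show "Re w \<ge> 0" using on_segment[OF w] by simp
  qed (use assms in auto)
  then show ?thesis by simp
qed

lemma norm_contour_integral_kernel_vertical_le:
  assumes "lam \<ge> 0" "\<bar>\<beta>\<bar> < 1/2" "Re u = \<beta> + real N" "Re v = Re u" "Re u \<ge> Re z + 1" "Re z \<ge> 0"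
  shows "norm (contour_integral (linepath u v) (kernel lam z))
    \<le> norm (cos (of_real pi * z)) / (cos (pi * \<beta>) / 2) * 2 * exp (- lam * Re u) * norm (v - u)"
proof -
  have on_segment: "Re w = Re u" if "w \<in> closed_segment u v" for w
    using that assms by (auto simp: closed_segment_same_Re)
  have "norm (contour_integral (linepath u v) (kernel lam z))
      \<le> norm (cos (of_real pi * z)) / (cos (pi * \<beta>) / 2) * (2 / 1) * exp (- lam * Re u) * norm (v - u)"
  proof (rule norm_contour_integral_kernel_linepath_le)
    show "cos (pi * \<beta>) / 2 > 0"
      using cos_pi_pos[OF assms(2)] by simp
    fix w assume w: "w \<in> closed_segment u v"
    have "cos (pi * \<beta>) \<le> \<bar>cos (pi * \<beta>)\<bar> * 1" by simp
    also have "\<dots> \<le> \<bar>cos (pi * \<beta>)\<bar> * exp (pi * \<bar>Im w\<bar>)"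
      by (intro mult_left_mono) simp_all
    finally have "cos (pi * \<beta>) / 2 \<le> \<bar>cos (pi * \<beta>)\<bar> * exp (pi * \<bar>Im w\<bar>) / 2"
      by simp
    also have "\<dots> \<le> norm (cos (of_real pi * w))"
      using on_segment[OF w] assms(3) by (intro norm_cos_pi_ge_on_vertical_line) simp
    finally show "norm (cos (of_real pi * w)) \<ge> cos (pi * \<beta>) / 2" .
    show "norm (z - w) \<ge> 1 \<and> norm (z + w) \<ge> 1"
      using abs_Re_le_cmod[of "z - w"] abs_Re_le_cmod[of "z + w"] on_segment[OF w] assms by auto
    show "Re w \<ge> Re u" using on_segment[OF w] by simp
  qed (use assms in auto)
  then show ?thesis by simp
qed

definition far_edges_integral :: "real \<Rightarrow> complex \<Rightarrow> real \<Rightarrow> nat \<Rightarrow> complex" where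
  "far_edges_integral lam z \<beta> N =
     contour_integral (linepath (Complex \<beta> (- real N)) (Complex (\<beta> + real N) (- real N))) (kernel lam z)
     + contour_integral (linepath (Complex (\<beta> + real N) (- real N)) (Complex (\<beta> + real N) (real N))) (kernel lam z)
     + contour_integral (linepath (Complex (\<beta> + real N) (real N)) (Complex \<beta> (real N))) (kernel lam z)"

lemma far_edges_integral_tendsto_0:
  assumes "lam > 0" "0 < \<beta>" "\<beta> < 1/2" "Re z > \<beta>"
  shows "far_edges_integral lam z \<beta> \<longlonglongrightarrow> 0"
proof (rule Lim_null_comparison)
  define C where "C = norm (cos (of_real pi * z))"
  define bound where "bound x = 8 * C * (x / (exp (pi * x) - exp (- pi * x)))
    + 8 * C / cos (pi * \<beta>) * exp (- lam * \<beta>) * (x * exp (- lam * x))" for x :: real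
  have "((\<lambda>x. x / (exp (pi * x) - exp (- pi * x))) \<longlongrightarrow> 0) at_top"
    by real_asymp
  moreover have "((\<lambda>x. x * exp (- lam * x)) \<longlongrightarrow> 0) at_top"
    using assms(1) by real_asymp
  ultimately have "(bound \<longlongrightarrow> 0) at_top"
    unfolding bound_def by (intro tendsto_add_zero tendsto_mult_right_zero)
  then show "(\<lambda>N. bound (real N)) \<longlonglongrightarrow> 0"
    by (rule filterlim_compose[OF _ filterlim_real_sequentially])
  show "\<forall>\<^sub>F N in sequentially. norm (far_edges_integral lam z \<beta> N) \<le> bound (real N)"
    unfolding eventually_sequentially
  proof (intro exI allI impI)
    fix N :: nat
    assume "N \<ge> nat \<lceil>norm z + 1\<rceil>"
    then have N: "real N \<ge> \<bar>Im z\<bar> + 1" "\<beta> + real N \<ge> Re z + 1"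
      using abs_Im_le_cmod[of z] abs_Re_le_cmod[of z] assms(2) by linarith+
    have bottom: "norm (contour_integral (linepath (Complex \<beta> (- real N)) (Complex (\<beta> + real N) (- real N))) (kernel lam z))
        \<le> C / ((exp (pi * real N) - exp (- pi * real N)) / 2) * 2 * real N"
      using norm_contour_integral_kernel_horizontal_le[of lam "Complex (\<beta> + real N) (- real N)" "Complex \<beta> (- real N)" z]
        N assms by (simp add: C_def cmod_def)
    have top: "norm (contour_integral (linepath (Complex (\<beta> + real N) (real N)) (Complex \<beta> (real N))) (kernel lam z))
        \<le> C / ((exp (pi * real N) - exp (- pi * real N)) / 2) * 2 * real N"
      using norm_contour_integral_kernel_horizontal_le[of lam "Complex \<beta> (real N)" "Complex (\<beta> + real N) (real N)" z]
        N assms by (simp add: C_def cmod_def)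
    have "Complex (\<beta> + real N) (real N) - Complex (\<beta> + real N) (- real N) = \<i> * of_real (2 * real N)"
      by (simp add: complex_eq_iff)
    then have height: "norm (Complex (\<beta> + real N) (real N) - Complex (\<beta> + real N) (- real N)) = 2 * real N"
      by (simp add: norm_mult)
    have right: "norm (contour_integral (linepath (Complex (\<beta> + real N) (- real N)) (Complex (\<beta> + real N) (real N))) (kernel lam z))
        \<le> C / (cos (pi * \<beta>) / 2) * 2 * exp (- lam * (\<beta> + real N)) * (2 * real N)"
      using norm_contour_integral_kernel_vertical_le[of lam \<beta> "Complex (\<beta> + real N) (- real N)" N
          "Complex (\<beta> + real N) (real N)" z]
        N assms by (simp add: C_def height)
    have "bound (real N) = 2 * (C / ((exp (pi * real N) - exp (- pi * real N)) / 2) * 2 * real N)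
        + C / (cos (pi * \<beta>) / 2) * 2 * exp (- lam * (\<beta> + real N)) * (2 * real N)"
      by (simp add: bound_def algebra_simps flip: exp_add)
    with bottom right top show "norm (far_edges_integral lam z \<beta> N) \<le> bound (real N)"
      unfolding far_edges_integral_def using norm_triangle_ineq by (smt (verit))
  qed
qed

lemma integrable_on_exp_neg_abs:
  assumes "c > 0"
  shows "(\<lambda>t::real. exp (- c * \<bar>t\<bar>)) integrable_on UNIV"
proof -
  have right: "(\<lambda>t. exp (- c * t)) absolutely_integrable_on {0..}"
    using assms by (intro nonnegative_absolutely_integrable_1 integrable_on_exp_minus_to_infinity) auto
  then have "(\<lambda>t. exp (- c * t)) absolutely_integrable_on uminus ` {..0}"
    by simp
  then have "(\<lambda>t. \<bar>-1\<bar> * exp (- c * - t)) absolutely_integrable_on {..0}"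
    by (subst (asm) absolutely_integrable_change_of_variables_1'[where h = "\<lambda>_. -1"])
       (auto intro!: derivative_eq_intros)
  then have "(\<lambda>t. exp (- c * \<bar>t\<bar>)) integrable_on {..0}"
    by (subst integrable_cong[where g = "\<lambda>t. \<bar>-1\<bar> * exp (- c * - t)"])
       (auto dest: absolutely_integrable_on_def[THEN iffD1])
  moreover have "(\<lambda>t. exp (- c * \<bar>t\<bar>)) integrable_on {0..}"
    using right by (subst integrable_cong[where g = "\<lambda>t. exp (- c * t)"])
       (auto dest: absolutely_integrable_on_def[THEN iffD1])
  ultimately show ?thesis
    by (rule integrable_Un') (auto intro: negligible_subset[OF negligible_sing])
qed

lemma integral_symmetric_intervals_tendsto:
  fixes g :: "real \<Rightarrow> 'a::euclidean_space"
  assumes "continuous_on UNIV g" "h integrable_on UNIV" "\<And>t. norm (g t) \<le> h t"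
  shows "g integrable_on UNIV" "(\<lambda>N::nat. integral {- real N..real N} g) \<longlonglongrightarrow> integral UNIV g"
proof -
  define g' where "g' N = (\<lambda>t. if t \<in> {- real N..real N} then g t else 0)" for N :: nat
  have "g' N integrable_on UNIV" for N
    unfolding g'_def integrable_restrict_UNIV
    by (intro integrable_continuous_interval continuous_on_subset[OF assms(1)]) auto
  moreover have "norm (g' N t) \<le> h t" for N t
    using assms(3)[of t] order_trans[OF norm_ge_zero assms(3)] by (auto simp: g'_def)
  moreover have "(\<lambda>N. g' N t) \<longlonglongrightarrow> g t" for t
  proof (rule tendsto_eventually, rule eventually_sequentiallyI)
    fix N :: nat assume "N \<ge> nat \<lceil>\<bar>t\<bar>\<rceil>"
    then show "g' N t = g t" by (auto simp: g'_def)
  qed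
  ultimately have "g integrable_on UNIV" "(\<lambda>N. integral UNIV (g' N)) \<longlonglongrightarrow> integral UNIV g"
    using dominated_convergence[OF _ assms(2), of g' g] by blast+
  then show "g integrable_on UNIV" "(\<lambda>N::nat. integral {- real N..real N} g) \<longlonglongrightarrow> integral UNIV g"
    by (simp_all only: g'_def integral_restrict_UNIV)
qed

lemma norm_kernel_on_line_le:
  assumes "lam \<ge> 0" "0 < \<beta>" "\<beta> < 1/2" "0 < \<delta>" "\<delta> \<le> Re z - \<beta>"
  shows "norm (kernel lam z (Complex \<beta> t))
    \<le> norm (cos (of_real pi * z)) * (4 / (\<delta> * cos (pi * \<beta>))) * exp (- pi * \<bar>t\<bar>)"
proof -
  have cos_pos: "cos (pi * \<beta>) > 0"
    using assms by (intro cos_pi_pos) simp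
  have "norm (kernel lam z (Complex \<beta> t))
      \<le> norm (cos (of_real pi * z)) / (cos (pi * \<beta>) * exp (pi * \<bar>t\<bar>) / 2) * (2 / \<delta>) * exp (- lam * \<beta>)"
  proof (rule order_trans[OF norm_kernel_le])
    show "cos (pi * \<beta>) * exp (pi * \<bar>t\<bar>) / 2 \<le> norm (cos (of_real pi * Complex \<beta> t))"
      using norm_cos_pi_ge_on_vertical_line[of "Complex \<beta> t" \<beta> 0] cos_pos by simp
    show "norm (z - Complex \<beta> t) \<ge> \<delta>" "norm (z + Complex \<beta> t) \<ge> \<delta>"
      using complex_Re_le_cmod[of "z - Complex \<beta> t"] complex_Re_le_cmod[of "z + Complex \<beta> t"] assms
      by auto
  qed (use assms cos_pos in auto)
  also have "\<dots> \<le> norm (cos (of_real pi * z)) / (cos (pi * \<beta>) * exp (pi * \<bar>t\<bar>) / 2) * (2 / \<delta>)"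
    using assms cos_pos by (intro mult_right_le_one_le) auto
  also have "\<dots> = norm (cos (of_real pi * z)) * (4 / (\<delta> * cos (pi * \<beta>))) * exp (- pi * \<bar>t\<bar>)"
    by (simp add: field_simps exp_minus)
  finally show ?thesis .
qed

lemma continuous_on_kernel_line:
  assumes "0 < \<beta>" "\<beta> < 1/2" "Re z > \<beta>"
  shows "continuous_on UNIV (\<lambda>t. kernel lam z (Complex \<beta> t))"
proof -
  have cos_pos: "cos (pi * \<beta>) > 0"
    using assms by (intro cos_pi_pos) simp
  have "cos (of_real pi * Complex \<beta> t) \<noteq> 0 \<and> (Complex \<beta> t)^2 \<noteq> z^2" for t
  proof
    have "0 < cos (pi * \<beta>) * exp (pi * \<bar>t\<bar>) / 2"
      using cos_pos by simp
    also have "\<dots> \<le> norm (cos (of_real pi * Complex \<beta> t))"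
      using norm_cos_pi_ge_on_vertical_line[of "Complex \<beta> t" \<beta> 0] cos_pos by simp
    finally show "cos (of_real pi * Complex \<beta> t) \<noteq> 0" by auto
    show "(Complex \<beta> t)^2 \<noteq> z^2"
      using assms by (auto simp: power2_eq_iff dest: arg_cong[of _ _ Re])
  qed
  then have "continuous_on (range (Complex \<beta>)) (kernel lam z)"
    by (intro holomorphic_on_imp_continuous_on holomorphic_on_subset[OF kernel_holomorphic]) auto
  moreover have "continuous_on UNIV (Complex \<beta>)"
    unfolding Complex_eq by (intro continuous_intros)
  ultimately show ?thesis
    by (rule continuous_on_compose2) auto
qed

lemma kernel_poles_off_rectpath:
  fixes N :: nat
  assumes "0 < \<beta>" "\<beta> < 1/2" "Re z > \<beta>" "real N > Re z - \<beta>" "real N > \<bar>Im z\<bar>"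
    and "w \<in> path_image (rectpath (Complex \<beta> (- real N)) (Complex (\<beta> + real N) (real N)))"
  shows "cos (of_real pi * w) \<noteq> 0 \<and> w^2 \<noteq> z^2"
proof
  have "real N > 0" using assms by linarith
  then have w: "(Re w = \<beta> + real 0 \<or> Re w = \<beta> + real N) \<and> \<bar>Im w\<bar> \<le> real N
      \<or> \<bar>Im w\<bar> = real N \<and> \<beta> \<le> Re w \<and> Re w \<le> \<beta> + real N"
    using assms(6) by (auto simp: path_image_rectpath)
  have "cos (pi * \<beta>) > 0"
    using assms by (intro cos_pi_pos) simp
  have vertical: "0 < norm (cos (of_real pi * w))" if "Re w = \<beta> + real M" for M
  proof -
    have "0 < \<bar>cos (pi * \<beta>)\<bar> * exp (pi * \<bar>Im w\<bar>) / 2"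
      using \<open>cos (pi * \<beta>) > 0\<close> by simp
    also have "\<dots> \<le> norm (cos (of_real pi * w))"
      using that by (rule norm_cos_pi_ge_on_vertical_line)
    finally show ?thesis .
  qed
  have horizontal: "0 < norm (cos (of_real pi * w))" if "\<bar>Im w\<bar> = real N"
  proof -
    have "0 < (exp (pi * real N) - exp (- (pi * real N))) / 2"
      using \<open>real N > 0\<close> by simp
    also have "\<dots> \<le> norm (cos (of_real pi * w))"
      using norm_cos_ge_exp_abs_Im[of "of_real pi * w"] that by (simp add: abs_mult)
    finally show ?thesis .
  qed
  have "Re w = \<beta> + real 0 \<or> Re w = \<beta> + real N \<or> \<bar>Im w\<bar> = real N"
    using w by blast
  then have "0 < norm (cos (of_real pi * w))"
    using vertical horizontal by blast
  then show "cos (of_real pi * w) \<noteq> 0"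
    by auto
  show "w^2 \<noteq> z^2"
    using w assms by (auto simp: power2_eq_iff)
qed

lemma integral_kernel_line_segment:
  fixes N :: nat
  assumes "0 < \<beta>" "\<beta> < 1/2" "Re z > \<beta>" "cos (of_real pi * z) \<noteq> 0"
    and "real N > Re z - \<beta>" "real N > \<bar>Im z\<bar>"
  shows "\<i> * integral {- real N..real N} (\<lambda>t. kernel lam z (Complex \<beta> t))
    = far_edges_integral lam z \<beta> N - 2 * of_real pi * \<i> * (cos (of_real pi * z) / of_real pi
        * (\<Sum>m<N. K_term lam z (int m + 1) + K_term lam z (- int m)) - exp (- of_real lam * z))"
proof -
  define a b where "a = Complex \<beta> (- real N)" and "b = Complex (\<beta> + real N) (real N)"
  have "path_image (rectpath a b) \<subseteq> {w. cos (of_real pi * w) \<noteq> 0 \<and> w^2 \<noteq> z^2}"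
    unfolding a_def b_def using assms kernel_poles_off_rectpath by blast
  then have "continuous_on (path_image (rectpath a b)) (kernel lam z)"
    by (intro holomorphic_on_imp_continuous_on holomorphic_on_subset[OF kernel_holomorphic])
  then have "contour_integral (rectpath a b) (kernel lam z)
      = far_edges_integral lam z \<beta> N - \<i> * integral {- real N..real N} (\<lambda>t. kernel lam z (Complex \<beta> t))"
    using assms by (subst contour_integral_rectpath_split) (auto simp: a_def b_def far_edges_integral_def)
  moreover have "contour_integral (rectpath a b) (kernel lam z)
      = 2 * of_real pi * \<i> * (cos (of_real pi * z) / of_real pi
          * (\<Sum>m<N. K_term lam z (int m + 1) + K_term lam z (- int m)) - exp (- of_real lam * z))"
    unfolding a_def b_def using assms by (intro kernel_rectpath_integral) auto
  ultimately show ?thesis by simp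
qed

lemma has_integral_kernel_line:
  assumes "lam > 0" "0 < \<beta>" "\<beta> < 1/2" "Re z > \<beta>" "cos (of_real pi * z) \<noteq> 0"
  shows "((\<lambda>t. kernel lam z (Complex \<beta> t) * \<i>)
    has_integral (2 * of_real pi * \<i> * (exp (- of_real lam * z) - K_raw lam z))) UNIV"
proof -
  define g where "g = (\<lambda>t. kernel lam z (Complex \<beta> t))"
  define C where "C = cos (of_real pi * z)"
  define S where "S N = (\<Sum>m<N. K_term lam z (int m + 1) + K_term lam z (- int m))" for N
  define M where "M = norm C * (4 / ((Re z - \<beta>) * cos (pi * \<beta>)))"
  have "continuous_on UNIV g"
    unfolding g_def using assms by (intro continuous_on_kernel_line)
  moreover have "(\<lambda>t. M * exp (- pi * \<bar>t\<bar>)) integrable_on UNIV"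
    by (intro integrable_on_mult_right integrable_on_exp_neg_abs) simp
  moreover have "norm (g t) \<le> M * exp (- pi * \<bar>t\<bar>)" for t
    unfolding g_def C_def M_def using assms by (intro norm_kernel_on_line_le) auto
  ultimately have "g integrable_on UNIV" and lim_integral: "(\<lambda>N. integral {- real N..real N} g) \<longlonglongrightarrow> integral UNIV g"
    by (rule integral_symmetric_intervals_tendsto)+
  have "\<forall>\<^sub>F N in sequentially. real N > Re z - \<beta> \<and> real N > \<bar>Im z\<bar>"
  proof (rule eventually_sequentiallyI)
    fix N assume "N \<ge> nat \<lceil>norm z\<rceil> + 1"
    then show "real N > Re z - \<beta> \<and> real N > \<bar>Im z\<bar>"
      using abs_Re_le_cmod[of z] abs_Im_le_cmod[of z] assms(2) by linarith
  qed
  then have eventually_eq: "\<forall>\<^sub>F N in sequentially. far_edges_integral lam z \<beta> N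
      - 2 * of_real pi * \<i> * (C / of_real pi * S N - exp (- of_real lam * z)) = \<i> * integral {- real N..real N} g"
    by (rule eventually_mono) (simp add: integral_kernel_line_segment[OF assms(2-5)] g_def C_def S_def)
  have "(\<lambda>N. far_edges_integral lam z \<beta> N - 2 * of_real pi * \<i> * (C / of_real pi * S N - exp (- of_real lam * z)))
      \<longlonglongrightarrow> 0 - 2 * of_real pi * \<i> * (C / of_real pi * (\<Sum>\<^sub>\<infinity>n. K_term lam z n) - exp (- of_real lam * z))"
    unfolding S_def
    using far_edges_integral_tendsto_0[OF assms(1-4)] K_term_pairs_sums[OF assms(1)] assms(2,4)
    by (intro tendsto_intros) (auto simp: sums_def)
  also have "0 - 2 * of_real pi * \<i> * (C / of_real pi * (\<Sum>\<^sub>\<infinity>n. K_term lam z n) - exp (- of_real lam * z))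
      = 2 * of_real pi * \<i> * (exp (- of_real lam * z) - K_raw lam z)"
    by (simp add: K_raw_eq_infsum C_def algebra_simps)
  finally have "(\<lambda>N. \<i> * integral {- real N..real N} g)
      \<longlonglongrightarrow> 2 * of_real pi * \<i> * (exp (- of_real lam * z) - K_raw lam z)"
    by (rule Lim_transform_eventually[OF _ eventually_eq])
  moreover have "(\<lambda>N. \<i> * integral {- real N..real N} g) \<longlonglongrightarrow> \<i> * integral UNIV g"
    using lim_integral by (rule tendsto_mult_left)
  ultimately have "\<i> * integral UNIV g = 2 * of_real pi * \<i> * (exp (- of_real lam * z) - K_raw lam z)"
    by (rule LIMSEQ_unique[rotated])
  then have "integral UNIV g * \<i> = 2 * of_real pi * \<i> * (exp (- of_real lam * z) - K_raw lam z)"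
    by (simp only: mult.commute)
  moreover have "((\<lambda>t. g t * \<i>) has_integral integral UNIV g * \<i>) UNIV"
    using \<open>g integrable_on UNIV\<close> by (intro has_integral_mult_left integrable_integral)
  ultimately show ?thesis
    by (simp only: g_def)
qed

lemma norm_K_raw_minus_exp_le:
  assumes "lam > 0" "0 < \<beta>" "\<beta> < 1/2" "0 < \<delta>" "\<delta> \<le> Re z - \<beta>" "cos (of_real pi * z) \<noteq> 0"
  shows "norm (K_raw lam z - exp (- of_real lam * z))
    \<le> norm (cos (of_real pi * z)) * (4 / (\<delta> * cos (pi * \<beta>))) * integral UNIV (\<lambda>t. exp (- pi * \<bar>t\<bar>)) / (2 * pi)"
proof -
  define M where "M = norm (cos (of_real pi * z)) * (4 / (\<delta> * cos (pi * \<beta>)))"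
  have "norm (kernel lam z (Complex \<beta> t)) \<le> M * exp (- pi * \<bar>t\<bar>)" for t
    unfolding M_def using assms by (intro norm_kernel_on_line_le) auto
  then have bound: "norm (kernel lam z (Complex \<beta> t) * \<i>) \<le> M * exp (- pi * \<bar>t\<bar>)" for t
    by (simp add: norm_mult)
  have "((\<lambda>t. kernel lam z (Complex \<beta> t) * \<i>)
      has_integral (2 * of_real pi * \<i> * (exp (- of_real lam * z) - K_raw lam z))) UNIV"
    using assms by (intro has_integral_kernel_line) auto
  moreover have "(\<lambda>t. M * exp (- pi * \<bar>t\<bar>)) integrable_on UNIV"
    by (intro integrable_on_mult_right integrable_on_exp_neg_abs) simp
  ultimately have "norm (2 * of_real pi * \<i> * (exp (- of_real lam * z) - K_raw lam z))
      \<le> integral UNIV (\<lambda>t. M * exp (- pi * \<bar>t\<bar>))"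
    using bound by (metis integral_unique has_integral_integrable integral_norm_bound_integral)
  then have "norm (K_raw lam z - exp (- of_real lam * z)) * (2 * pi) \<le> M * integral UNIV (\<lambda>t. exp (- pi * \<bar>t\<bar>))"
    by (simp add: norm_mult norm_minus_commute mult.commute)
  then show ?thesis
    unfolding M_def by (subst pos_le_divide_eq) simp_all
qed

lemma K_eq_exp_at_pole:
  assumes "lam > 0" "Re z > 0" "cos (of_real pi * z) = 0"
  shows "K lam z = exp (- of_real lam * z)"
proof -
  obtain n :: int where n: "z = of_int n + 1/2"
    using cos_pi_eq_0_imp_half_integer[OF assms(3)] by blast
  with assms(2) have "Re z \<ge> 1/2" by simp
  define c where "c = 4 / (1/8 * cos (pi * (1/4))) * integral UNIV (\<lambda>t. exp (- pi * \<bar>t\<bar>)) / (2 * pi)"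
  have bound: "\<forall>\<^sub>F \<zeta> in at z. norm (K_raw lam \<zeta> - exp (- of_real lam * \<zeta>)) \<le> norm (cos (of_real pi * \<zeta>)) * c"
    unfolding eventually_at
  proof (intro exI[of _ "1/8"] conjI ballI impI)
    fix \<zeta> :: complex assume "\<zeta> \<in> UNIV" and \<zeta>: "\<zeta> \<noteq> z \<and> dist \<zeta> z < 1/8"
    then have "\<bar>Re \<zeta> - Re z\<bar> < 1/8"
      using abs_Re_le_cmod[of "\<zeta> - z"] by (simp add: dist_norm)
    then have "1/8 \<le> Re \<zeta> - 1/4"
      using \<open>Re z \<ge> 1/2\<close> by linarith
    moreover have "cos (of_real pi * \<zeta>) \<noteq> 0"
    proof
      assume "cos (of_real pi * \<zeta>) = 0"
      then obtain m :: int where m: "\<zeta> = of_int m + 1/2"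
        using cos_pi_eq_0_imp_half_integer by blast
      with n \<zeta> have "m \<noteq> n" "dist \<zeta> z = \<bar>real_of_int (m - n)\<bar>"
        by (auto simp: dist_norm simp flip: of_int_diff)
      then show False
        using \<zeta> by linarith
    qed
    ultimately show "norm (K_raw lam \<zeta> - exp (- of_real lam * \<zeta>)) \<le> norm (cos (of_real pi * \<zeta>)) * c"
      using norm_K_raw_minus_exp_le[of lam "1/4" "1/8" \<zeta>] assms(1) by (simp add: c_def mult.left_commute)
  qed simp
  have "((\<lambda>\<zeta>. norm (cos (of_real pi * \<zeta>)) * c) \<longlongrightarrow> norm (cos (of_real pi * z)) * c) (at z)"
    by (intro tendsto_intros)
  then have "((\<lambda>\<zeta>. norm (cos (of_real pi * \<zeta>)) * c) \<longlongrightarrow> 0) (at z)"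
    using assms(3) by simp
  with bound have "((\<lambda>\<zeta>. K_raw lam \<zeta> - exp (- of_real lam * \<zeta>)) \<longlongrightarrow> 0) (at z)"
    by (rule Lim_null_comparison)
  then have "((\<lambda>\<zeta>. K_raw lam \<zeta> - exp (- of_real lam * \<zeta>) + exp (- of_real lam * \<zeta>)) \<longlongrightarrow> 0 + exp (- of_real lam * z)) (at z)"
    by (intro tendsto_intros)
  then have "(K_raw lam \<longlongrightarrow> exp (- of_real lam * z)) (at z)"
    by simp
  then show ?thesis
    using assms(3) by (simp add: K_def tendsto_Lim)
qed

theorem lemma4p1:
  fixes lam \<beta> :: real and z :: complex
  assumes "lam > 0" and "0 < \<beta>" and "\<beta> < 1/2" and "Re z > \<beta>"
  shows "((\<lambda>t::real. (cos (of_real pi * z) / cos (of_real pi * (of_real \<beta> + \<i> * of_real t)))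
              * (2 * (of_real \<beta> + \<i> * of_real t) / (z^2 - (of_real \<beta> + \<i> * of_real t)^2))
              * exp (- of_real lam * (of_real \<beta> + \<i> * of_real t)) * \<i>)
          has_integral (2 * of_real pi * \<i> * (exp (- of_real lam * z) - K lam z))) UNIV"
proof (cases "cos (of_real pi * z) = 0")
  case True
  then show ?thesis
    using K_eq_exp_at_pole[OF assms(1)] assms by simp
next
  case False
  then show ?thesis
    using has_integral_kernel_line[OF assms False] by (simp add: K_def kernel_def Complex_eq)
qed

end
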